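(* Let $t$, $l$, $n$ be positive integers with $t \geq 2l$, and put $t' = [t/l]$. Then for every integer $p > \frac{t'n-1}{t'-1}$ we have $R_{t-l,t}(K_{1,n}) \leq p$.
   Context: $[a]$ denotes the integer part (floor) of a real number $a$. $K_{1,n}$ is the star with $n$ edges. For a graph $G$ and integers $1 \leq s < t$, $R_{s,t}(G)$ is the smallest positive integer $N$ such that every coloring of the edges of the complete graph $K_N$ with $t$ colors contains a (not necessarily induced) subgraph isomorphic to $G$ whose edges use at most $s$ distinct colors. *)

theory Defs
  imports Complex_Main
begin

text \<open>The complete graph K_N has vertex set {..<N} and all 2-subsets as edges.\<close>

definition edge_colouring :: "nat \<Rightarrow> nat \<Rightarrow> (nat set \<Rightarrow> nat) \<Rightarrow> bool" where
  "edge_colouring N t c \<longleftrightarrow> (\<forall>e. e \<subseteq> {..<N} \<and> card e = 2 \<longrightarrow> c e < t)"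

definition has_s_coloured_copy ::
    "nat \<Rightarrow> 'a set \<Rightarrow> 'a set set \<Rightarrow> nat \<Rightarrow> (nat set \<Rightarrow> nat) \<Rightarrow> bool" where
  "has_s_coloured_copy s V E N c \<longleftrightarrow>
     (\<exists>f. inj_on f V \<and> f ` V \<subseteq> {..<N} \<and> card ((\<lambda>e. c (f ` e)) ` E) \<le> s)"

definition ramsey_prop :: "nat \<Rightarrow> nat \<Rightarrow> 'a set \<Rightarrow> 'a set set \<Rightarrow> nat \<Rightarrow> bool" where
  "ramsey_prop s t V E N \<longleftrightarrow>
     (\<forall>c. edge_colouring N t c \<longrightarrow> has_s_coloured_copy s V E N c)"

definition R_st :: "nat \<Rightarrow> nat \<Rightarrow> 'a set \<Rightarrow> 'a set set \<Rightarrow> nat" where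
  "R_st s t V E = (LEAST N. N > 0 \<and> ramsey_prop s t V E N)"

definition star_V :: "nat \<Rightarrow> nat set" where
  "star_V n = {0..n}"

definition star_E :: "nat \<Rightarrow> nat set set" where
  "star_E n = {{0, i} | i. i \<in> {1..n}}"

end

theory Submission
  imports Defs
begin

text \<open>Let T = [t/l] and split the colours 0, ..., Tl - 1 into T blocks of l consecutive
colours. Of the N - 1 edges at the vertex 0 of K_N, by pigeonhole some block colours at most
(N - 1)/T. The remaining edges at 0 avoid that block, so they carry at most t - l colours,
and there are at least (N - 1)(T - 1)/T > n - 1 of them as soon as N(T - 1) \<ge> Tn, which for
integers N is the condition N > (Tn - 1)/(T - 1). Any n of them form a star K_{1,n} with at
most t - l colours.\<close>

lemma obtain_sparse_fibre:
  fixes q :: "'a \<Rightarrow> nat"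
  assumes "finite X" and "0 < T"
  obtains j where "j < T" and "T * card {x \<in> X. q x = j} \<le> card X"
proof -
  have "(\<Sum>j<T. card {x \<in> X. q x = j}) = card (\<Union>j<T. {x \<in> X. q x = j})"
    using assms(1) by (intro card_UN_disjoint[symmetric]) auto
  also have "\<dots> \<le> card X"
    using assms(1) by (intro card_mono) auto
  finally have sum_le: "(\<Sum>j<T. card {x \<in> X. q x = j}) \<le> card X" .
  show thesis
  proof (rule ccontr)
    assume "\<not> thesis"
    with that have "\<forall>j<T. card X < T * card {x \<in> X. q x = j}"
      by (meson not_le)
    then have "(\<Sum>j<T. card X) < (\<Sum>j<T. T * card {x \<in> X. q x = j})"
      using assms(2) by (intro sum_strict_mono) auto
    then have "T * card X < T * (\<Sum>j<T. card {x \<in> X. q x = j})"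
      by (simp add: sum_distrib_left)
    with sum_le show False
      by (meson mult_le_mono2 not_le)
  qed
qed

lemma obtain_class_avoided_by_many:
  fixes q :: "'a \<Rightarrow> nat"
  assumes "finite X" and "0 < T" and "T * n \<le> Suc (card X) * (T - 1)"
  obtains j where "j < T" and "n \<le> card {x \<in> X. q x \<noteq> j}"
proof -
  obtain j where "j < T" and sparse: "T * card {x \<in> X. q x = j} \<le> card X"
    by (rule obtain_sparse_fibre[OF assms(1,2)])
  define a where "a = card {x \<in> X. q x = j}"
  have "{x \<in> X. q x \<noteq> j} = X - {x \<in> X. q x = j}"
    by auto
  then have "card {x \<in> X. q x \<noteq> j} = card X - a"
    unfolding a_def using assms(1) by (simp add: card_Diff_subset)
  moreover have "n \<le> card X - a"
  proof (rule ccontr)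
    assume "\<not> ?thesis"
    then have "Suc (card X) \<le> n + a"
      by linarith
    then have "T * Suc (card X) \<le> T * n + T * a"
      by (metis add_mult_distrib2 mult_le_mono2)
    also have "\<dots> \<le> Suc (card X) * (T - 1) + card X"
      using sparse assms(3) unfolding a_def by linarith
    also have "\<dots> < T * Suc (card X)"
    proof -
      have "Suc (card X) * (T - 1) + Suc (card X) = T * Suc (card X)"
        using assms(2) by (cases T) auto
      then show ?thesis
        by linarith
    qed
    finally show False
      by simp
  qed
  ultimately show thesis
    using that \<open>j < T\<close> by simp
qed

lemma card_colours_outside_block:
  fixes t l j :: nat
  assumes "j < t div l"
  shows "card {x. x < t \<and> x div l \<noteq> j} = t - l"
proof -
  have "0 < l"
    using assms by (cases l) auto
  have "Suc j * l \<le> t"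
    using assms less_eq_div_iff_mult_less_eq[OF \<open>0 < l\<close>, of "Suc j" t] by simp
  moreover have div_iff: "x div l = j \<longleftrightarrow> j * l \<le> x \<and> x < Suc j * l" for x
    using less_eq_div_iff_mult_less_eq[OF \<open>0 < l\<close>, of j x]
      div_less_iff_less_mult[OF \<open>0 < l\<close>, of x "Suc j"] by auto
  ultimately have block: "{x. x < t \<and> x div l = j} = {j * l..<Suc j * l}"
    unfolding div_iff by auto
  have "{x. x < t \<and> x div l \<noteq> j} = {..<t} - {x. x < t \<and> x div l = j}"
    by auto
  also have "card \<dots> = card {..<t} - card {j * l..<Suc j * l}"
    unfolding block using \<open>Suc j * l \<le> t\<close> by (intro card_Diff_subset) auto
  also have "\<dots> = t - l"
    by simp
  finally show ?thesis .
qed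

lemma has_s_coloured_copy_star:
  assumes "0 < N" and "S \<subseteq> {1..<N}" and "n \<le> card S" and "card ((\<lambda>i. c {0, i}) ` S) \<le> s"
  shows "has_s_coloured_copy s (star_V n) (star_E n) N c"
proof -
  have "finite S"
    using assms(2) finite_subset by blast
  then obtain S' where "S' \<subseteq> S" and "card S' = n"
    using assms(3) by (meson obtain_subset_with_card_n)
  then obtain h where h: "bij_betw h {1..n} S'"
    using finite_same_card_bij[of "{1..n}" S'] \<open>finite S\<close> finite_subset by auto
  have leaves: "h ` {1..n} \<subseteq> {1..<N}"
    using h \<open>S' \<subseteq> S\<close> assms(2) by (auto simp: bij_betw_def)
  define f where "f = h(0 := 0)"
  have star_V_eq: "star_V n = insert 0 {1..n}"
    by (auto simp: star_V_def)
  have f_leaves: "f ` {1..n} = h ` {1..n}"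
    by (auto simp: f_def)
  have "inj_on f (star_V n)"
    unfolding star_V_eq inj_on_insert
  proof
    show "inj_on f {1..n}"
      unfolding f_def using h leaves by (intro inj_on_fun_updI) (auto simp: bij_betw_def)
    show "f 0 \<notin> f ` ({1..n} - {0})"
      using f_leaves leaves by (auto simp: f_def)
  qed
  moreover have "f ` star_V n \<subseteq> {..<N}"
    using f_leaves leaves assms(1) by (auto simp: star_V_eq f_def)
  moreover have "card ((\<lambda>e. c (f ` e)) ` star_E n) \<le> s"
  proof -
    have "star_E n = (\<lambda>i. {0, i}) ` {1..n}"
      by (auto simp: star_E_def)
    then have "(\<lambda>e. c (f ` e)) ` star_E n = (\<lambda>i. c (f ` {0, i})) ` {1..n}"
      by (simp add: image_image)
    also have "\<dots> = (\<lambda>i. c {0, i}) ` h ` {1..n}"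
      unfolding image_image by (rule image_cong) (simp_all add: f_def insert_commute)
    also have "\<dots> \<subseteq> (\<lambda>i. c {0, i}) ` S"
      using h \<open>S' \<subseteq> S\<close> by (auto simp: bij_betw_def)
    finally show ?thesis
      using assms(4) \<open>finite S\<close> by (meson card_mono finite_imageI le_trans)
  qed
  ultimately show ?thesis
    unfolding has_s_coloured_copy_def by blast
qed

lemma ramsey_prop_star:
  fixes t l n N :: nat
  assumes "0 < l" and "l \<le> t" and "0 < n" and "t div l * n \<le> N * (t div l - 1)"
  shows "ramsey_prop (t - l) t (star_V n) (star_E n) N"
  unfolding ramsey_prop_def
proof (intro allI impI)
  fix c
  assume colouring: "edge_colouring N t c"
  define T where "T = t div l"
  define g where "g i = c {0, i}" for i
  have "0 < T"
    using assms(1,2) by (simp add: T_def div_greater_zero_iff)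
  have "0 < N"
    using assms(3,4) \<open>0 < T\<close> by (cases N) (simp_all flip: T_def)
  then have "T * n \<le> Suc (card {1..<N}) * (T - 1)"
    using assms(4) by (simp add: T_def)
  then obtain j where "j < T" and many: "n \<le> card {i \<in> {1..<N}. g i div l \<noteq> j}"
    by (rule obtain_class_avoided_by_many[OF finite_atLeastLessThan \<open>0 < T\<close>])
  define S where "S = {i \<in> {1..<N}. g i div l \<noteq> j}"
  have "n \<le> card S"
    using many by (simp only: S_def)
  have "g i < t" if "i \<in> {1..<N}" for i
  proof -
    have "{0, i} \<subseteq> {..<N}" and "card {0, i} = 2"
      using that by auto
    then show ?thesis
      using colouring unfolding edge_colouring_def g_def by blast
  qed
  then have "g ` S \<subseteq> {x. x < t \<and> x div l \<noteq> j}"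
    by (auto simp: S_def)
  then have "card (g ` S) \<le> card {x. x < t \<and> x div l \<noteq> j}"
    by (intro card_mono) auto
  also have "\<dots> = t - l"
    using card_colours_outside_block \<open>j < T\<close> unfolding T_def .
  finally have "card (g ` S) \<le> t - l" .
  then have "card ((\<lambda>i. c {0, i}) ` S) \<le> t - l"
    by (simp add: g_def[abs_def])
  moreover have "S \<subseteq> {1..<N}"
    by (auto simp: S_def)
  ultimately show "has_s_coloured_copy (t - l) (star_V n) (star_E n) N c"
    using has_s_coloured_copy_star[OF \<open>0 < N\<close>, of S n] \<open>n \<le> card S\<close> by simp
qed

theorem theorem1:
  fixes t l n :: nat and p :: int
  assumes "t > 0" and "l > 0" and "n > 0" and "t \<ge> 2 * l"
    and "real_of_int p > (real (t div l) * real n - 1) / (real (t div l) - 1)"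
  shows "int (R_st (t - l) t (star_V n) (star_E n)) \<le> p"
proof -
  define T where "T = t div l"
  have "2 \<le> T"
    using div_le_mono[OF assms(4), of l] assms(2) by (simp add: T_def)
  then have "real_of_int (int T * int n - 1) < real_of_int (p * (int T - 1))"
    using assms(5) by (simp add: T_def pos_divide_less_eq)
  then have p_bound: "int T * int n \<le> p * (int T - 1)"
    by linarith
  moreover have "0 < int T * int n"
    using \<open>2 \<le> T\<close> assms(3) by simp
  ultimately have "0 < p * (int T - 1)"
    by linarith
  then have "0 < p"
    using \<open>2 \<le> T\<close> by (simp add: zero_less_mult_iff)
  define N where "N = nat p"
  have "int (T * n) \<le> int (N * (T - 1))"
    using p_bound \<open>0 < p\<close> \<open>2 \<le> T\<close> by (simp add: N_def of_nat_diff)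
  then have "T * n \<le> N * (T - 1)"
    by (simp only: of_nat_le_iff)
  then have "ramsey_prop (t - l) t (star_V n) (star_E n) N"
    using assms(2-4) by (intro ramsey_prop_star) (simp_all add: T_def)
  then have "R_st (t - l) t (star_V n) (star_E n) \<le> N"
    unfolding R_st_def using \<open>0 < p\<close> by (intro Least_le) (simp add: N_def)
  then show ?thesis
    using \<open>0 < p\<close> by (simp add: N_def)
qed

end
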